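(* Let $\widehat A$ be an operator on $L^2(\mathbb{R}^N)$ with Weyl symbol $A$, let $z_0\in T^*\mathbb{R}^N$ and $a_0:=A(z_0)$. Let $g$ be a smooth function and let $C$ be the Weyl symbol of $\widehat C:=g(\widehat A)$. If $g$ has a zero of order $m$ at $a_0$, then $C(z_0)=O(\hbar^{m/2})$.
   Context: Symbols are elements of $\mathcal{C}^\infty(T^*\mathbb{R}^N)[[\hbar]]$ and operators are related to symbols by Weyl quantization $A\mapsto\widehat A$, which is an algebra isomorphism onto its image when symbols carry the Moyal product $\star$ (i.e. the symbol of $\widehat C\widehat D$ is $C\star D$), where $C\star D=\sum_{k\ge0}\frac1{k!}(\frac{i\hbar}{2})^k C_{,\mu_1\ldots\mu_k}J^{\mu_1\nu_1}\cdots J^{\mu_k\nu_k}D_{,\nu_1\ldots\nu_k}$ in coordinates $z=(x,p)$ with $(J^{\mu\nu})=\begin{pmatrix}0&I_N\\-I_N&0\end{pmatrix}$. Functions of operators $g(\widehat A)$ are defined by a spectral calculus, which is an algebra morphism: $g(\widehat A)h(\widehat A)=(gh)(\widehat A)$. *)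

theory Defs
  imports "HOL-Analysis.Analysis"
begin

text \<open>Phase space T*R^N = R^(2N), coordinates indexed by 'n + 'n:
  Inl i is the position coordinate x_i, Inr i the momentum coordinate p_i.\<close>

type_synonym 'n phase = "(real, 'n + 'n) vec"

text \<open>A symbol in C^infty(T*R^N)[[hbar]]: coefficient k is the coefficient of hbar^k.\<close>
type_synonym 'n symb = "nat \<Rightarrow> 'n phase \<Rightarrow> complex"

definition pdiff :: "('n::finite + 'n) \<Rightarrow> ('n phase \<Rightarrow> complex) \<Rightarrow> 'n phase \<Rightarrow> complex" where
  "pdiff \<mu> f = (\<lambda>z. vector_derivative (\<lambda>t::real. f (z + t *\<^sub>R axis \<mu> 1)) (at 0))"

fun iter_pdiff :: "('n::finite + 'n) list \<Rightarrow> ('n phase \<Rightarrow> complex) \<Rightarrow> 'n phase \<Rightarrow> complex" where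
  "iter_pdiff [] f = f"
| "iter_pdiff (\<mu> # \<mu>s) f = pdiff \<mu> (iter_pdiff \<mu>s f)"

definition smooth_phase :: "('n::finite phase \<Rightarrow> complex) \<Rightarrow> bool" where
  "smooth_phase f \<longleftrightarrow> (\<forall>\<mu>s z. iter_pdiff \<mu>s f differentiable (at z))"

definition smooth_symb :: "'n::finite symb \<Rightarrow> bool" where
  "smooth_symb S \<longleftrightarrow> (\<forall>k. smooth_phase (S k))"

fun symplJ :: "('n + 'n) \<Rightarrow> ('n + 'n) \<Rightarrow> real" where
  "symplJ (Inl i) (Inr j) = (if i = j then 1 else 0)"
| "symplJ (Inr i) (Inl j) = (if i = j then -1 else 0)"
| "symplJ _ _ = 0"

text \<open>Moyal product of formal power series in hbar:
  C * D = sum_k 1/k! (i hbar/2)^k C_{,mu1..muk} J^{mu1 nu1}...J^{muk nuk} D_{,nu1..nuk},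
  written coefficientwise in hbar.\<close>
definition moyal_term :: "nat \<Rightarrow> ('n::finite phase \<Rightarrow> complex) \<Rightarrow> ('n phase \<Rightarrow> complex) \<Rightarrow> 'n phase \<Rightarrow> complex" where
  "moyal_term k f h z =
     (\<Sum>\<mu>s\<in>{\<mu>s::('n+'n) list. length \<mu>s = k}. \<Sum>\<nu>s\<in>{\<nu>s::('n+'n) list. length \<nu>s = k}.
        iter_pdiff \<mu>s f z * complex_of_real (\<Prod>r<k. symplJ (\<mu>s ! r) (\<nu>s ! r)) * iter_pdiff \<nu>s h z)"

definition moyal :: "'n::finite symb \<Rightarrow> 'n symb \<Rightarrow> 'n symb" (infixl "\<star>" 70) where
  "moyal C D = (\<lambda>n z. \<Sum>j\<le>n. \<Sum>k\<le>n - j.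
      (\<i> / 2) ^ k / of_nat (fact k) * moyal_term k (C j) (D (n - j - k)) z)"

definition const_symb :: "complex \<Rightarrow> 'n symb" where
  "const_symb c = (\<lambda>k z. if k = 0 then c else 0)"

definition vderiv :: "(real \<Rightarrow> complex) \<Rightarrow> real \<Rightarrow> complex" where
  "vderiv g = (\<lambda>t. vector_derivative g (at t))"

definition smooth_fun :: "(real \<Rightarrow> complex) \<Rightarrow> bool" where
  "smooth_fun g \<longleftrightarrow> (\<forall>k t. (vderiv ^^ k) g differentiable (at t))"

definition zero_of_order :: "(real \<Rightarrow> complex) \<Rightarrow> real \<Rightarrow> nat \<Rightarrow> bool" where
  "zero_of_order g a m \<longleftrightarrow> (\<forall>k<m. (vderiv ^^ k) g a = 0) \<and> (vderiv ^^ m) g a \<noteq> 0"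

text \<open>Spectral calculus of the operator with Weyl symbol A, read on symbols:
  Phi g is the Weyl symbol of g(A^).\<close>
definition symbol_calculus :: "'n::finite symb \<Rightarrow> ((real \<Rightarrow> complex) \<Rightarrow> 'n symb) \<Rightarrow> bool" where
  "symbol_calculus A \<Phi> \<longleftrightarrow>
     (\<forall>g. smooth_fun g \<longrightarrow> smooth_symb (\<Phi> g)) \<and>
     (\<forall>g h. smooth_fun g \<longrightarrow> smooth_fun h \<longrightarrow> \<Phi> (\<lambda>t. g t + h t) = (\<lambda>k z. \<Phi> g k z + \<Phi> h k z)) \<and>
     (\<forall>g h. smooth_fun g \<longrightarrow> smooth_fun h \<longrightarrow> \<Phi> (\<lambda>t. g t * h t) = \<Phi> g \<star> \<Phi> h) \<and>
     (\<forall>c. \<Phi> (\<lambda>_. c) = const_symb c) \<and>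
     \<Phi> (\<lambda>t. complex_of_real t) = A"

end

theory Submission
  imports Defs
begin

text \<open>
  By Hadamard's lemma g(t) = (t - a0)^m h(t) with h smooth, so the symbol of g(A^) is
  B \<star> ... \<star> B \<star> \<Phi> h (m factors B), where B is the symbol of A^ - a0, all of whose
  hbar-coefficients vanish at z0. Give hbar the weight 2 and say that a symbol has weight p at z0
  if its hbar^n-coefficient vanishes to order p - 2n there. The k-th Moyal term carries hbar^k and
  differentiates each factor k times, so weights add under \<star>. Hence the symbol of g(A^) has
  weight m, and its hbar^k-coefficient vanishes at z0 as soon as m - 2k > 0.
\<close>

lemma differentiable_sum_list:
  fixes F :: "'i \<Rightarrow> 'a::real_normed_vector \<Rightarrow> 'b::real_normed_vector"
  assumes "\<forall>x\<in>set xs. F x differentiable (at z)"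
  shows "(\<lambda>z. \<Sum>x\<leftarrow>xs. F x z) differentiable (at z)"
  using assms by (induction xs) (auto intro: differentiable_add)

lemma vector_derivative_sum_list:
  fixes F :: "'i \<Rightarrow> real \<Rightarrow> 'b::real_normed_vector"
  assumes "\<forall>x\<in>set xs. F x differentiable (at t)"
  shows "vector_derivative (\<lambda>t. \<Sum>x\<leftarrow>xs. F x t) (at t) = (\<Sum>x\<leftarrow>xs. vector_derivative (F x) (at t))"
  using assms
proof (induction xs)
  case Nil then show ?case by (simp add: vector_derivative_const_at)
next
  case (Cons x xs)
  then show ?case
    by (simp add: vector_derivative_add_at differentiable_sum_list)
qed

lemma differentiable_along_axis:
  fixes f :: "'n::finite phase \<Rightarrow> complex"
  assumes "f differentiable (at z)"
  shows "(\<lambda>t::real. f (z + t *\<^sub>R axis \<mu> 1)) differentiable (at 0)"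
proof -
  have "(\<lambda>t::real. z + t *\<^sub>R axis \<mu> 1) differentiable (at 0)"
    by (intro derivative_intros)
  moreover have "f differentiable (at ((\<lambda>t::real. z + t *\<^sub>R axis \<mu> 1) 0))"
    using assms by simp
  ultimately show ?thesis
    by (rule differentiable_compose[rotated])
qed

lemma pdiff_mult:
  fixes f h :: "'n::finite phase \<Rightarrow> complex"
  assumes "f differentiable (at z)" "h differentiable (at z)"
  shows "pdiff \<mu> (\<lambda>z. f z * h z) z = pdiff \<mu> f z * h z + f z * pdiff \<mu> h z"
  unfolding pdiff_def using differentiable_along_axis[OF assms(1)] differentiable_along_axis[OF assms(2)]
  by simp

lemma pdiff_sum:
  fixes F :: "'i \<Rightarrow> 'n::finite phase \<Rightarrow> complex"
  assumes "\<And>i. i \<in> I \<Longrightarrow> F i differentiable (at z)"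
  shows "pdiff \<mu> (\<lambda>z. \<Sum>i\<in>I. F i z) z = (\<Sum>i\<in>I. pdiff \<mu> (F i) z)"
  unfolding pdiff_def
  by (rule vector_derivative_at, rule has_vector_derivative_sum)
     (use differentiable_along_axis[OF assms] in \<open>auto simp: vector_derivative_works\<close>)

lemma pdiff_sum_list:
  fixes F :: "'i \<Rightarrow> 'n::finite phase \<Rightarrow> complex"
  assumes "\<forall>x\<in>set xs. F x differentiable (at z)"
  shows "pdiff \<mu> (\<lambda>z. \<Sum>x\<leftarrow>xs. F x z) z = (\<Sum>x\<leftarrow>xs. pdiff \<mu> (F x) z)"
  unfolding pdiff_def
  by (rule vector_derivative_sum_list) (use differentiable_along_axis assms in blast)

lemma iter_pdiff_append:
  "iter_pdiff (\<mu>s @ \<nu>s) f = iter_pdiff \<mu>s (iter_pdiff \<nu>s f)"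
  by (induction \<mu>s) auto

lemma iter_pdiff_const:
  "iter_pdiff \<mu>s (\<lambda>_. c) = (\<lambda>_. if \<mu>s = [] then c else 0)"
  by (induction \<mu>s) (auto simp: pdiff_def)

lemma smooth_phase_differentiable: "smooth_phase f \<Longrightarrow> f differentiable (at z)"
  unfolding smooth_phase_def by (metis iter_pdiff.simps(1))

lemma smooth_phase_iter_pdiff: "smooth_phase f \<Longrightarrow> smooth_phase (iter_pdiff \<nu>s f)"
  unfolding smooth_phase_def by (simp add: iter_pdiff_append[symmetric])

lemma smooth_phase_const: "smooth_phase (\<lambda>_. c)"
  unfolding smooth_phase_def iter_pdiff_const by simp

lemma iter_pdiff_sum:
  fixes F :: "'i \<Rightarrow> 'n::finite phase \<Rightarrow> complex"
  assumes "\<forall>i\<in>I. smooth_phase (F i)"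
  shows "iter_pdiff \<mu>s (\<lambda>z. \<Sum>i\<in>I. F i z) = (\<lambda>z. \<Sum>i\<in>I. iter_pdiff \<mu>s (F i) z)"
proof (induction \<mu>s)
  case (Cons \<mu> \<mu>s)
  have "iter_pdiff \<mu>s (F i) differentiable (at z)" if "i \<in> I" for i z
    using assms that by (blast intro: smooth_phase_differentiable smooth_phase_iter_pdiff)
  then show ?case by (simp add: Cons pdiff_sum)
qed simp

lemma smooth_phase_sum:
  fixes F :: "'i \<Rightarrow> 'n::finite phase \<Rightarrow> complex"
  assumes "finite I" "\<forall>i\<in>I. smooth_phase (F i)"
  shows "smooth_phase (\<lambda>z. \<Sum>i\<in>I. F i z)"
  using assms unfolding smooth_phase_def iter_pdiff_sum[OF assms(2)]
  by (auto intro!: differentiable_sum)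

lemma iter_pdiff_mult_expansion:
  fixes f h :: "'n::finite phase \<Rightarrow> complex"
  assumes "smooth_phase f" "smooth_phase h"
  obtains P where "\<forall>(\<alpha>s, \<beta>s)\<in>set P. length \<alpha>s + length \<beta>s = length \<mu>s"
    and "iter_pdiff \<mu>s (\<lambda>z. f z * h z) = (\<lambda>z. \<Sum>(\<alpha>s, \<beta>s)\<leftarrow>P. iter_pdiff \<alpha>s f z * iter_pdiff \<beta>s h z)"
proof (induction \<mu>s arbitrary: thesis)
  case Nil
  show ?case by (rule Nil[of "[([], [])]"]) auto
next
  case (Cons \<mu> \<mu>s)
  obtain P where len: "\<forall>(\<alpha>s, \<beta>s)\<in>set P. length \<alpha>s + length \<beta>s = length \<mu>s"
    and eq: "iter_pdiff \<mu>s (\<lambda>z. f z * h z) = (\<lambda>z. \<Sum>(\<alpha>s, \<beta>s)\<leftarrow>P. iter_pdiff \<alpha>s f z * iter_pdiff \<beta>s h z)"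
    by (rule Cons.IH)
  have diff: "iter_pdiff \<alpha>s F differentiable (at z)" if "smooth_phase F" for \<alpha>s F z
    using that by (blast intro: smooth_phase_differentiable smooth_phase_iter_pdiff)
  define P' where "P' = map (\<lambda>(\<alpha>s, \<beta>s). (\<mu> # \<alpha>s, \<beta>s)) P @ map (\<lambda>(\<alpha>s, \<beta>s). (\<alpha>s, \<mu> # \<beta>s)) P"
  have "\<forall>(\<alpha>s, \<beta>s)\<in>set P'. length \<alpha>s + length \<beta>s = length (\<mu> # \<mu>s)"
    using len by (auto simp: P'_def)
  moreover have "iter_pdiff (\<mu> # \<mu>s) (\<lambda>z. f z * h z) =
      (\<lambda>z. \<Sum>(\<alpha>s, \<beta>s)\<leftarrow>P'. iter_pdiff \<alpha>s f z * iter_pdiff \<beta>s h z)"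
  proof
    fix z
    have "iter_pdiff (\<mu> # \<mu>s) (\<lambda>z. f z * h z) z =
        (\<Sum>(\<alpha>s, \<beta>s)\<leftarrow>P. pdiff \<mu> (\<lambda>z. iter_pdiff \<alpha>s f z * iter_pdiff \<beta>s h z) z)"
      unfolding iter_pdiff.simps eq
      by (subst pdiff_sum_list) (auto simp: diff assms differentiable_mult intro!: arg_cong[where f=sum_list])
    also have "\<dots> = (\<Sum>(\<alpha>s, \<beta>s)\<leftarrow>P.
        iter_pdiff (\<mu> # \<alpha>s) f z * iter_pdiff \<beta>s h z + iter_pdiff \<alpha>s f z * iter_pdiff (\<mu> # \<beta>s) h z)"
      by (intro arg_cong[where f=sum_list] map_cong) (auto simp: pdiff_mult diff assms)
    also have "\<dots> = (\<Sum>(\<alpha>s, \<beta>s)\<leftarrow>P'. iter_pdiff \<alpha>s f z * iter_pdiff \<beta>s h z)"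
      unfolding P'_def map_append sum_list_append map_map
      by (simp only: comp_def case_prod_unfold fst_conv snd_conv sum_list_addf)
    finally show "iter_pdiff (\<mu> # \<mu>s) (\<lambda>z. f z * h z) z =
      (\<Sum>(\<alpha>s, \<beta>s)\<leftarrow>P'. iter_pdiff \<alpha>s f z * iter_pdiff \<beta>s h z)" .
  qed
  ultimately show ?case by (rule Cons.prems)
qed

lemma smooth_phase_mult:
  fixes f h :: "'n::finite phase \<Rightarrow> complex"
  assumes "smooth_phase f" "smooth_phase h"
  shows "smooth_phase (\<lambda>z. f z * h z)"
  unfolding smooth_phase_def
proof (intro allI)
  fix \<mu>s z
  obtain P where "\<forall>(\<alpha>s, \<beta>s)\<in>set P. length \<alpha>s + length \<beta>s = length \<mu>s"
    and eq: "iter_pdiff \<mu>s (\<lambda>z. f z * h z) =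
      (\<lambda>z. \<Sum>(\<alpha>s, \<beta>s)\<leftarrow>P. iter_pdiff \<alpha>s f z * iter_pdiff \<beta>s h z)"
    by (rule iter_pdiff_mult_expansion[OF assms])
  have "(\<lambda>z. iter_pdiff \<alpha>s f z * iter_pdiff \<beta>s h z) differentiable (at z)" for \<alpha>s \<beta>s
    using assms by (intro differentiable_mult smooth_phase_differentiable smooth_phase_iter_pdiff)
  then show "iter_pdiff \<mu>s (\<lambda>z. f z * h z) differentiable (at z)"
    unfolding eq by (intro differentiable_sum_list) (simp add: case_prod_unfold)
qed

section \<open>Order of vanishing and the Moyal product\<close>

definition vanishes_to_order :: "'n::finite phase \<Rightarrow> int \<Rightarrow> ('n phase \<Rightarrow> complex) \<Rightarrow> bool" where
  "vanishes_to_order z0 p f \<longleftrightarrow> (\<forall>\<mu>s. int (length \<mu>s) < p \<longrightarrow> iter_pdiff \<mu>s f z0 = 0)"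

lemma vanishes_to_order_mono: "vanishes_to_order z0 p f \<Longrightarrow> q \<le> p \<Longrightarrow> vanishes_to_order z0 q f"
  unfolding vanishes_to_order_def by auto

lemma vanishes_to_order_nonpos: "p \<le> 0 \<Longrightarrow> vanishes_to_order z0 p f"
  unfolding vanishes_to_order_def by auto

lemma vanishes_to_order_one_iff: "vanishes_to_order z0 1 f \<longleftrightarrow> f z0 = 0"
  unfolding vanishes_to_order_def by simp

lemma vanishes_to_order_iter_pdiff:
  "vanishes_to_order z0 p f \<Longrightarrow> vanishes_to_order z0 (p - int (length \<nu>s)) (iter_pdiff \<nu>s f)"
  unfolding vanishes_to_order_def by (auto simp: iter_pdiff_append[symmetric])

lemma vanishes_to_order_sum:
  fixes F :: "'i \<Rightarrow> 'n::finite phase \<Rightarrow> complex"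
  assumes "\<forall>i\<in>I. smooth_phase (F i)" "\<forall>i\<in>I. vanishes_to_order z0 p (F i)"
  shows "vanishes_to_order z0 p (\<lambda>z. \<Sum>i\<in>I. F i z)"
  using assms(2) unfolding vanishes_to_order_def iter_pdiff_sum[OF assms(1)] by simp

lemma vanishes_to_order_mult:
  fixes f h :: "'n::finite phase \<Rightarrow> complex"
  assumes "smooth_phase f" "smooth_phase h" "vanishes_to_order z0 p f" "vanishes_to_order z0 q h"
  shows "vanishes_to_order z0 (p + q) (\<lambda>z. f z * h z)"
  unfolding vanishes_to_order_def
proof (intro allI impI)
  fix \<mu>s :: "('n + 'n) list"
  assume short: "int (length \<mu>s) < p + q"
  obtain P where len: "\<forall>(\<alpha>s, \<beta>s)\<in>set P. length \<alpha>s + length \<beta>s = length \<mu>s"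
    and eq: "iter_pdiff \<mu>s (\<lambda>z. f z * h z) =
      (\<lambda>z. \<Sum>(\<alpha>s, \<beta>s)\<leftarrow>P. iter_pdiff \<alpha>s f z * iter_pdiff \<beta>s h z)"
    by (rule iter_pdiff_mult_expansion[OF assms(1,2)])
  have "iter_pdiff \<alpha>s f z0 * iter_pdiff \<beta>s h z0 = 0" if "(\<alpha>s, \<beta>s) \<in> set P" for \<alpha>s \<beta>s
  proof -
    have "int (length \<alpha>s) < p \<or> int (length \<beta>s) < q"
      using len that short by auto
    then show ?thesis
      using assms(3,4) unfolding vanishes_to_order_def by auto
  qed
  then show "iter_pdiff \<mu>s (\<lambda>z. f z * h z) z0 = 0"
    unfolding eq by (induction P) auto
qed

lemma finite_lists_of_length: "finite {xs :: 'a::finite list. length xs = k}"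
  using finite_lists_length_eq[of "UNIV :: 'a set" k] by simp

lemma smooth_phase_moyal_term:
  assumes "smooth_phase f" "smooth_phase h"
  shows "smooth_phase (moyal_term k f h)"
proof -
  have "smooth_phase (\<lambda>z. iter_pdiff \<mu>s f z * c * iter_pdiff \<nu>s h z)" for \<mu>s \<nu>s c
    using assms by (intro smooth_phase_mult smooth_phase_const smooth_phase_iter_pdiff)
  then show ?thesis
    unfolding moyal_term_def[abs_def]
    by (intro smooth_phase_sum finite_lists_of_length ballI)
qed

lemma vanishes_to_order_moyal_term:
  assumes "smooth_phase f" "smooth_phase h" "vanishes_to_order z0 p f" "vanishes_to_order z0 q h"
  shows "vanishes_to_order z0 (p + q - 2 * int k) (moyal_term k f h)"
proof -
  have "vanishes_to_order z0 (p + q - 2 * int k) (\<lambda>z. iter_pdiff \<mu>s f z * c * iter_pdiff \<nu>s h z)"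
    if "length \<mu>s = k" "length \<nu>s = k" for \<mu>s \<nu>s c
  proof -
    have "vanishes_to_order z0 (p - int k) (iter_pdiff \<mu>s f)"
      using vanishes_to_order_iter_pdiff[OF assms(3), of \<mu>s] that by simp
    moreover have "vanishes_to_order z0 (q - int k) (iter_pdiff \<nu>s h)"
      using vanishes_to_order_iter_pdiff[OF assms(4), of \<nu>s] that by simp
    moreover have "vanishes_to_order z0 0 (\<lambda>_. c)"
      by (rule vanishes_to_order_nonpos) simp
    ultimately have "vanishes_to_order z0 ((p - int k) + 0 + (q - int k))
        (\<lambda>z. iter_pdiff \<mu>s f z * c * iter_pdiff \<nu>s h z)"
      using assms(1,2)
      by (intro vanishes_to_order_mult smooth_phase_mult smooth_phase_const smooth_phase_iter_pdiff)
    then show ?thesis by (simp add: algebra_simps)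
  qed
  moreover have "smooth_phase (\<lambda>z. iter_pdiff \<mu>s f z * c * iter_pdiff \<nu>s h z)" for \<mu>s \<nu>s c
    using assms by (intro smooth_phase_mult smooth_phase_const smooth_phase_iter_pdiff)
  ultimately show ?thesis
    unfolding moyal_term_def[abs_def]
    by (intro vanishes_to_order_sum smooth_phase_sum finite_lists_of_length ballI) auto
qed

definition symb_vanishes_to_order :: "'n::finite phase \<Rightarrow> int \<Rightarrow> 'n symb \<Rightarrow> bool" where
  "symb_vanishes_to_order z0 p S \<longleftrightarrow> (\<forall>n. vanishes_to_order z0 (p - 2 * int n) (S n))"

lemma symb_vanishes_to_order_moyal:
  assumes C: "smooth_symb C" "symb_vanishes_to_order z0 p C"
    and D: "smooth_symb D" "symb_vanishes_to_order z0 q D"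
  shows "symb_vanishes_to_order z0 (p + q) (C \<star> D)"
  unfolding symb_vanishes_to_order_def
proof
  fix n
  define T where "T j k = (\<lambda>z. (\<i> / 2) ^ k / of_nat (fact k) * moyal_term k (C j) (D (n - j - k)) z)"
    for j k
  have smooth_term: "smooth_phase (moyal_term k (C j) (D i))" for i j k
    using C(1) D(1) unfolding smooth_symb_def by (intro smooth_phase_moyal_term) auto
  then have smooth_T: "smooth_phase (T j k)" for j k
    unfolding T_def by (intro smooth_phase_mult smooth_phase_const)
  have "vanishes_to_order z0 (p + q - 2 * int n) (T j k)" if "j \<le> n" "k \<le> n - j" for j k
  proof -
    have order: "(p - 2 * int j) + (q - 2 * int (n - j - k)) - 2 * int k = p + q - 2 * int n"
      using that by (simp add: of_nat_diff)
    have "vanishes_to_order z0 (p + q - 2 * int n) (moyal_term k (C j) (D (n - j - k)))"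
      unfolding order[symmetric] using C D unfolding smooth_symb_def symb_vanishes_to_order_def
      by (intro vanishes_to_order_moyal_term) auto
    with smooth_term have "vanishes_to_order z0 (0 + (p + q - 2 * int n)) (T j k)"
      unfolding T_def
      by (intro vanishes_to_order_mult smooth_phase_const) (auto intro: vanishes_to_order_nonpos)
    then show ?thesis by simp
  qed
  moreover have "(C \<star> D) n = (\<lambda>z. \<Sum>j\<le>n. \<Sum>k\<le>n - j. T j k z)"
    by (simp add: moyal_def T_def)
  ultimately show "vanishes_to_order z0 (p + q - 2 * int n) ((C \<star> D) n)"
    using smooth_T by (auto intro!: vanishes_to_order_sum smooth_phase_sum)
qed

section \<open>Smooth functions of one variable and Hadamard's lemma\<close>

lemma higher_vderiv_mult_expansion:
  fixes f h :: "real \<Rightarrow> complex"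
  assumes "smooth_fun f" "smooth_fun h"
  obtains P where "(vderiv ^^ k) (\<lambda>t. f t * h t) =
    (\<lambda>t. \<Sum>(i, j)\<leftarrow>P. (vderiv ^^ i) f t * (vderiv ^^ j) h t)"
proof (induction k arbitrary: thesis)
  case 0
  show ?case by (rule 0[of "[(0, 0)]"]) simp
next
  case (Suc k)
  obtain P where eq: "(vderiv ^^ k) (\<lambda>t. f t * h t) =
      (\<lambda>t. \<Sum>(i, j)\<leftarrow>P. (vderiv ^^ i) f t * (vderiv ^^ j) h t)"
    by (rule Suc.IH)
  have diff: "(vderiv ^^ i) F differentiable (at t)" if "smooth_fun F" for i F t
    using that unfolding smooth_fun_def by blast
  have vd: "vderiv F t = vector_derivative F (at t)" for F t
    by (simp add: vderiv_def)
  define P' where "P' = map (\<lambda>(i, j). (Suc i, j)) P @ map (\<lambda>(i, j). (i, Suc j)) P"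
  have "(vderiv ^^ Suc k) (\<lambda>t. f t * h t) =
      (\<lambda>t. \<Sum>(i, j)\<leftarrow>P'. (vderiv ^^ i) f t * (vderiv ^^ j) h t)"
  proof
    fix t
    have "(vderiv ^^ Suc k) (\<lambda>t. f t * h t) t =
        vector_derivative (\<lambda>t. \<Sum>(i, j)\<leftarrow>P. (vderiv ^^ i) f t * (vderiv ^^ j) h t) (at t)"
      by (simp only: funpow.simps(2) o_def eq vd)
    also have "\<dots> =
        (\<Sum>(i, j)\<leftarrow>P. vector_derivative (\<lambda>t. (vderiv ^^ i) f t * (vderiv ^^ j) h t) (at t))"
      by (subst vector_derivative_sum_list)
        (auto simp: diff assms differentiable_mult intro!: arg_cong[where f=sum_list])
    also have "\<dots> = (\<Sum>(i, j)\<leftarrow>P.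
        (vderiv ^^ Suc i) f t * (vderiv ^^ j) h t + (vderiv ^^ i) f t * (vderiv ^^ Suc j) h t)"
      by (intro arg_cong[where f=sum_list] map_cong) (auto simp: vd diff assms)
    also have "\<dots> = (\<Sum>(i, j)\<leftarrow>P'. (vderiv ^^ i) f t * (vderiv ^^ j) h t)"
      unfolding P'_def map_append sum_list_append map_map
      by (simp only: comp_def case_prod_unfold fst_conv snd_conv sum_list_addf)
    finally show "(vderiv ^^ Suc k) (\<lambda>t. f t * h t) t =
        (\<Sum>(i, j)\<leftarrow>P'. (vderiv ^^ i) f t * (vderiv ^^ j) h t)" .
  qed
  then show ?case by (rule Suc.prems)
qed

lemma smooth_fun_mult:
  assumes "smooth_fun f" "smooth_fun h"
  shows "smooth_fun (\<lambda>t. f t * h t)"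
  unfolding smooth_fun_def
proof (intro allI)
  fix k t
  obtain P where eq: "(vderiv ^^ k) (\<lambda>t. f t * h t) =
      (\<lambda>t. \<Sum>(i, j)\<leftarrow>P. (vderiv ^^ i) f t * (vderiv ^^ j) h t)"
    by (rule higher_vderiv_mult_expansion[OF assms])
  have "(\<lambda>t. (vderiv ^^ i) f t * (vderiv ^^ j) h t) differentiable (at t)" for i j
    using assms unfolding smooth_fun_def by (intro differentiable_mult) auto
  then show "(vderiv ^^ k) (\<lambda>t. f t * h t) differentiable (at t)"
    unfolding eq by (intro differentiable_sum_list) (simp add: case_prod_unfold)
qed

lemma higher_vderiv_const: "(vderiv ^^ k) (\<lambda>_. c) = (\<lambda>_. if k = 0 then c else 0)"
  by (induction k) (auto simp: vderiv_def)

lemma smooth_fun_const: "smooth_fun (\<lambda>_. c)"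
  unfolding smooth_fun_def higher_vderiv_const by simp

lemma smooth_fun_of_real_minus_const: "smooth_fun (\<lambda>t. complex_of_real t - c)"
  unfolding smooth_fun_def
proof (intro allI)
  fix k t
  have "vderiv (\<lambda>t. complex_of_real t - c) = (\<lambda>_. 1)"
    unfolding vderiv_def by (intro ext vector_derivative_at) (auto intro!: derivative_eq_intros)
  then show "(vderiv ^^ k) (\<lambda>t. complex_of_real t - c) differentiable (at t)"
    by (cases k) (auto simp: funpow_Suc_right higher_vderiv_const simp del: funpow.simps)
qed

lemma has_vector_derivative_segment_integral:
  fixes f f' :: "real \<Rightarrow> complex"
  assumes f': "\<And>x. (f has_vector_derivative f' x) (at x)" and cont_f': "continuous_on UNIV f'"
  shows "((\<lambda>t. integral {0..1} (\<lambda>s. complex_of_real (s ^ k) * f (a + s * (t - a))))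
    has_vector_derivative integral {0..1} (\<lambda>s. complex_of_real (s ^ Suc k) * f' (a + s * (t - a)))) (at t)"
proof -
  have cont_f: "continuous_on UNIV f"
    using f' by (intro continuous_on_vector_derivative) (auto intro: has_vector_derivative_at_within)
  have deriv: "((\<lambda>x. complex_of_real (s ^ k) * f (a + s * (x - a))) has_vector_derivative
      complex_of_real (s ^ Suc k) * f' (a + s * (x - a))) (at x within UNIV)" for x s
  proof -
    have "((\<lambda>x. a + s * (x - a)) has_vector_derivative s) (at x)"
      by (auto intro!: derivative_eq_intros simp: has_real_derivative_iff_has_vector_derivative[symmetric])
    from vector_diff_chain_at[OF this f']
    have "((\<lambda>x. complex_of_real (s ^ k) * f (a + s * (x - a))) has_vector_derivative
        complex_of_real (s ^ k) * (s *\<^sub>R f' (a + s * (x - a)))) (at x)"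
      unfolding o_def by (rule has_vector_derivative_mult_right)
    then show ?thesis by (simp add: scaleR_conv_of_real mult_ac)
  qed
  have "continuous_on (UNIV \<times> cbox 0 1)
      (\<lambda>p. complex_of_real (snd p ^ Suc k) * f' (a + snd p * (fst p - a)))"
    by (intro continuous_intros continuous_on_compose2[OF cont_f']) auto
  then have cont: "continuous_on (UNIV \<times> cbox 0 1)
      (\<lambda>(x, s). complex_of_real (s ^ Suc k) * f' (a + s * (x - a)))"
    by (simp add: case_prod_unfold)
  have "continuous_on {0..1} (\<lambda>s. complex_of_real (s ^ k) * f (a + s * (x - a)))" for x
    by (intro continuous_intros continuous_on_compose2[OF cont_f]) auto
  then have int: "(\<lambda>s. complex_of_real (s ^ k) * f (a + s * (x - a))) integrable_on cbox 0 1" for x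
    by (simp add: integrable_continuous_interval)
  show ?thesis
    using leibniz_rule_vector_derivative[OF deriv int cont, of t] by simp
qed

lemma smooth_fun_factor_linear:
  fixes g :: "real \<Rightarrow> complex"
  assumes g: "smooth_fun g" and root: "g a = 0"
  obtains h where "smooth_fun h" "g = (\<lambda>t. (complex_of_real t - complex_of_real a) * h t)"
    and "\<And>k. (vderiv ^^ Suc k) g a = 0 \<Longrightarrow> (vderiv ^^ k) h a = 0"
proof -
  define D where "D k = (vderiv ^^ k) g" for k
  have D': "(D k has_vector_derivative D (Suc k) x) (at x)" for k x
    using g unfolding D_def smooth_fun_def by (simp add: vderiv_def vector_derivative_works)
  have cont_D: "continuous_on UNIV (D k)" for k
    using D' by (intro continuous_on_vector_derivative) (auto intro: has_vector_derivative_at_within)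
  define I where "I k = (\<lambda>t. integral {0..1} (\<lambda>s. complex_of_real (s ^ k) * D (Suc k) (a + s * (t - a))))"
    for k
  have I': "(I k has_vector_derivative I (Suc k) t) (at t)" for k t
    unfolding I_def by (rule has_vector_derivative_segment_integral[OF D' cont_D])
  define h where "h = I 0"
  have higher_h: "(vderiv ^^ k) h = I k" for k
  proof (induction k)
    case (Suc k)
    show ?case
      by (simp only: funpow.simps(2) o_def Suc.IH) (auto simp: vderiv_def intro!: ext vector_derivative_at I')
  qed (simp add: h_def)
  have "smooth_fun h"
    unfolding smooth_fun_def higher_h using I' differentiableI_vector by blast
  moreover have "g t = (complex_of_real t - complex_of_real a) * h t" for t
  proof -
    have "((\<lambda>s. (t - a) *\<^sub>R D 1 (a + s * (t - a))) has_integral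
        (g (a + 1 * (t - a)) - g (a + 0 * (t - a)))) {0..1}"
    proof (rule fundamental_theorem_of_calculus)
      fix x :: real
      have "((\<lambda>s. a + s * (t - a)) has_vector_derivative (t - a)) (at x)"
        by (auto intro!: derivative_eq_intros simp: has_real_derivative_iff_has_vector_derivative[symmetric])
      from vector_diff_chain_at[OF this D'[of 0]]
      show "((\<lambda>s. g (a + s * (t - a))) has_vector_derivative (t - a) *\<^sub>R D 1 (a + x * (t - a)))
          (at x within {0..1})"
        by (auto simp: D_def o_def intro: has_vector_derivative_at_within)
    qed simp
    then have "((\<lambda>s. (t - a) *\<^sub>R D 1 (a + s * (t - a))) has_integral g t) {0..1}"
      using root by simp
    moreover have "continuous_on {0..1} (\<lambda>s. D 1 (a + s * (t - a)))"
      by (intro continuous_intros continuous_on_compose2[OF cont_D]) auto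
    then have "((\<lambda>s. D 1 (a + s * (t - a))) has_integral h t) {0..1}"
      unfolding h_def I_def by (simp add: integrable_integral integrable_continuous_interval)
    then have "((\<lambda>s. (t - a) *\<^sub>R D 1 (a + s * (t - a))) has_integral (t - a) *\<^sub>R h t) {0..1}"
      by (rule has_integral_cmul)
    ultimately have "g t = (t - a) *\<^sub>R h t"
      by (rule has_integral_unique)
    then show ?thesis by (simp add: scaleR_conv_of_real)
  qed
  moreover have "(vderiv ^^ k) h a = 0" if "(vderiv ^^ Suc k) g a = 0" for k
    using that by (simp add: higher_h I_def D_def del: funpow.simps)
  ultimately show ?thesis using that by blast
qed

lemma smooth_fun_factor_power:
  fixes g :: "real \<Rightarrow> complex"
  assumes "smooth_fun g" "\<forall>k<m. (vderiv ^^ k) g a = 0"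
  obtains h where "smooth_fun h" "g = (\<lambda>t. (complex_of_real t - complex_of_real a) ^ m * h t)"
  using assms
proof (induction m arbitrary: g thesis)
  case 0
  then show ?case by simp
next
  case (Suc m)
  obtain h1 where h1: "smooth_fun h1" "g = (\<lambda>t. (complex_of_real t - complex_of_real a) * h1 t)"
    and higher_h1: "\<And>k. (vderiv ^^ Suc k) g a = 0 \<Longrightarrow> (vderiv ^^ k) h1 a = 0"
    using smooth_fun_factor_linear[OF Suc.prems(2)] Suc.prems(3) by (metis funpow_0 zero_less_Suc)
  have "\<forall>k<m. (vderiv ^^ k) h1 a = 0"
    using Suc.prems(3) higher_h1 by (auto simp del: funpow.simps)
  then obtain h where "smooth_fun h" "h1 = (\<lambda>t. (complex_of_real t - complex_of_real a) ^ m * h t)"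
    using Suc.IH h1(1) by blast
  then show ?case
    using Suc.prems(1) h1(2) by (simp add: fun_eq_iff mult.assoc)
qed

lemma symbol_calculus_shift:
  assumes "symbol_calculus A \<Phi>"
  shows "\<Phi> (\<lambda>t. complex_of_real t - c) k z = A k z - const_symb c k z"
proof -
  have "smooth_fun (\<lambda>t. complex_of_real t)"
    using smooth_fun_of_real_minus_const[of 0] by simp
  then have "\<Phi> (\<lambda>t. complex_of_real t + - c) =
      (\<lambda>k z. \<Phi> (\<lambda>t. complex_of_real t) k z + \<Phi> (\<lambda>_. - c) k z)"
    using assms smooth_fun_const unfolding symbol_calculus_def by blast
  then show ?thesis
    using assms unfolding symbol_calculus_def const_symb_def by simp
qed

lemma symbol_calculus_power_mult:
  assumes \<Phi>: "symbol_calculus A \<Phi>" and l: "smooth_fun l" and h: "smooth_fun h"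
    and vanish_l: "symb_vanishes_to_order z0 1 (\<Phi> l)"
  shows "symb_vanishes_to_order z0 (int j) (\<Phi> (\<lambda>t. l t ^ j * h t))"
proof -
  have smooth_power_mult: "smooth_fun (\<lambda>t. l t ^ i * h t)" for i
  proof (induction i)
    case (Suc i)
    then show ?case
      using smooth_fun_mult[OF l Suc.IH] by (simp add: mult.assoc)
  qed (simp add: h)
  show ?thesis
  proof (induction j)
    case 0
    show ?case unfolding symb_vanishes_to_order_def by (simp add: vanishes_to_order_nonpos)
  next
    case (Suc j)
    have "\<Phi> (\<lambda>t. l t ^ Suc j * h t) = \<Phi> (\<lambda>t. l t * (l t ^ j * h t))"
      by (simp add: mult.assoc)
    also have "\<dots> = \<Phi> l \<star> \<Phi> (\<lambda>t. l t ^ j * h t)"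
      using \<Phi> l smooth_power_mult unfolding symbol_calculus_def by blast
    finally show ?case
      using symb_vanishes_to_order_moyal[OF _ vanish_l _ Suc.IH] \<Phi> l smooth_power_mult
      unfolding symbol_calculus_def by (simp add: add.commute)
  qed
qed

theorem lemma3:
  fixes A :: "'n::finite symb"
    and \<Phi> :: "(real \<Rightarrow> complex) \<Rightarrow> 'n symb"
    and z0 :: "'n phase"
    and a0 :: real
    and g :: "real \<Rightarrow> complex"
    and m :: nat
  assumes "smooth_symb A"
    and "A 0 z0 = complex_of_real a0"
    and "\<forall>k>0. A k z0 = 0"
    and "symbol_calculus A \<Phi>"
    and "smooth_fun g"
    and "zero_of_order g a0 m"
  shows "\<forall>k. 2 * k < m \<longrightarrow> \<Phi> g k z0 = 0"
proof -
  define l where "l t = complex_of_real t - complex_of_real a0" for t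
  obtain h where h: "smooth_fun h" and g: "g = (\<lambda>t. l t ^ m * h t)"
    using smooth_fun_factor_power[OF assms(5)] assms(6) unfolding zero_of_order_def l_def by blast
  have l: "smooth_fun l"
    unfolding l_def by (rule smooth_fun_of_real_minus_const)
  have "\<Phi> l k z0 = 0" for k
    using assms(2,3) symbol_calculus_shift[OF assms(4)] unfolding l_def const_symb_def
    by (cases "k = 0") auto
  then have "symb_vanishes_to_order z0 1 (\<Phi> l)"
    unfolding symb_vanishes_to_order_def
    by (auto intro: vanishes_to_order_mono[where p = 1] simp: vanishes_to_order_one_iff)
  from symbol_calculus_power_mult[OF assms(4) l h this]
  have order: "vanishes_to_order z0 (int m - 2 * int k) (\<Phi> g k)" for k
    unfolding g symb_vanishes_to_order_def by blast
  show ?thesis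
  proof (intro allI impI)
    fix k
    assume "2 * k < m"
    then have "1 \<le> int m - 2 * int k" by linarith
    with order[of k] show "\<Phi> g k z0 = 0"
      using vanishes_to_order_mono vanishes_to_order_one_iff by blast
  qed
qed

end
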